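(* For each of the following sets $\mathcal S\subseteq\{0,1\}^3$, and for every set obtained from it by any sequence of coordinate negations and coordinate permutations, $\rho(\mathcal S)=1$: $\{000,001\}$, $\{000,001,110\}$, $\{000,001,110,111\}$, $\{000,011,101\}$, $\{000,011,101,110\}$.
   Context: Binary triples $(x_1,x_2,x_3)\in\{0,1\}^3$ are written $x_1x_2x_3$. Let $\mathcal S\subseteq\{0,1\}^3$ be nonempty. A distribution scheme with domain $\mathcal S$ is a pair $(P_R,\psi)$ where $P_R$ is a probability distribution on a finite set $\mathcal R$ and $\psi:\mathcal S\times\mathcal R\to\mathcal W_{12}\times\mathcal W_{23}\times\mathcal W_{31}$ for finite share alphabets. Given $\mathbf x=(x_1,x_2,x_3)\in\mathcal S$, the shares are $(W_{12},W_{23},W_{31})=\psi(\mathbf x,R)$, $R\sim P_R$. Party $P_1$ sees $V_1=(W_{12},W_{31})$, $P_2$ sees $V_2=(W_{23},W_{12})$, $P_3$ sees $V_3=(W_{31},W_{23})$. It is a 3SS scheme if (Correctness) for each $i$ there is a function $\phi_i$ with $\Pr[\phi_i(V_i)=x_i]=1$ for every $\mathbf x\in\mathcal S$, and (Perfect privacy) for each $i$ and all $\mathbf x,\mathbf x'\in\mathcal S$ with $x_i=x'_i$, $V_i$ has the same distribution under secret $\mathbf x$ as under $\mathbf x'$. The randomness complexity $\rho(\mathcal S)$ is the minimum of $\log_2|\mathcal R|$ over all 3SS schemes with domain $\mathcal S$. A coordinate negation maps $\mathcal S$ to $\{\mathbf x\oplus e_i:\mathbf x\in\mathcal S\}$;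 a coordinate permutation permutes the three coordinates of every element. *)

theory Defs
  imports Complex_Main "HOL-Combinatorics.Permutations"
begin

text \<open>Binary triples x1x2x3 are elements of bool \<times> bool \<times> bool; True encodes 1.\<close>
type_synonym triple = "bool \<times> bool \<times> bool"

definition get :: "nat \<Rightarrow> triple \<Rightarrow> bool" where
  "get i x = (if i = 1 then fst x else if i = 2 then fst (snd x) else snd (snd x))"

definition mk :: "(nat \<Rightarrow> bool) \<Rightarrow> triple" where
  "mk f = (f 1, f 2, f 3)"

definition negate_coord :: "nat \<Rightarrow> triple set \<Rightarrow> triple set" where
  "negate_coord i S = (\<lambda>x. mk (\<lambda>j. if j = i then \<not> get j x else get j x)) ` S"

definition permute_coords :: "(nat \<Rightarrow> nat) \<Rightarrow> triple set \<Rightarrow> triple set" where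
  "permute_coords \<sigma> S = (\<lambda>x. mk (\<lambda>j. get (\<sigma> j) x)) ` S"

inductive_set equiv_class :: "triple set \<Rightarrow> triple set set" for S where
  base: "S \<in> equiv_class S"
| neg: "T \<in> equiv_class S \<Longrightarrow> i \<in> {1,2,3} \<Longrightarrow> negate_coord i T \<in> equiv_class S"
| perm: "T \<in> equiv_class S \<Longrightarrow> \<sigma> permutes {1,2,3} \<Longrightarrow> permute_coords \<sigma> T \<in> equiv_class S"

definition view :: "nat \<Rightarrow> nat \<times> nat \<times> nat \<Rightarrow> nat \<times> nat" where
  "view i w = (case w of (w12, w23, w31) \<Rightarrow>
      if i = 1 then (w12, w31) else if i = 2 then (w23, w12) else (w31, w23))"

text \<open>A 3SS scheme with domain S: randomness set R (a finite set, WLOG of naturals),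
  distribution P on R, and share map \<psi>.\<close>
definition is_3SS ::
  "triple set \<Rightarrow> nat set \<Rightarrow> (nat \<Rightarrow> real) \<Rightarrow> (triple \<Rightarrow> nat \<Rightarrow> nat \<times> nat \<times> nat) \<Rightarrow> bool" where
  "is_3SS S R P \<psi> \<longleftrightarrow>
     finite R \<and> (\<forall>r\<in>R. 0 \<le> P r) \<and> sum P R = 1 \<and>
     (\<forall>i\<in>{1,2,3}. \<exists>\<phi> :: nat \<times> nat \<Rightarrow> bool.
        \<forall>x\<in>S. sum P {r\<in>R. \<phi> (view i (\<psi> x r)) = get i x} = 1) \<and>
     (\<forall>i\<in>{1,2,3}. \<forall>x\<in>S. \<forall>x'\<in>S. get i x = get i x' \<longrightarrow>
        (\<forall>v. sum P {r\<in>R. view i (\<psi> x r) = v} = sum P {r\<in>R. view i (\<psi> x' r) = v}))"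

definition rho :: "triple set \<Rightarrow> real" where
  "rho S = Inf {log 2 (real (card R)) | R P \<psi>. is_3SS S R P \<psi>}"

end

theory Submission
  imports Defs
begin

text \<open>If a set of secrets lies in an affine plane \<open>x\<^sub>1 \<oplus> x\<^sub>2 \<oplus> x\<^sub>3 = c\<close> or
  \<open>x\<^sub>k \<oplus> x\<^sub>k\<^sub>+\<^sub>1 = c\<close>, one uniform random bit suffices: the dealer pads coordinates with it,
  and the plane equation lets every party decode its coordinate from its two shares.
  Conversely, a scheme with a single random value is deterministic, so party \<open>i\<close> sees the same
  view for two secrets exactly when their \<open>i\<close>-th coordinates agree. Then two parties that agree
  see all three shares, which rules out two secrets at Hamming distance 1, and a short count of
  differing shares rules out three secrets at pairwise distance 2. The five listed sets have both
  properties, and both are invariant under coordinate negations and permutations.\<close>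

lemma get_simps [simp]:
  "get 1 (a, b, c) = a" "get (Suc 0) (a, b, c) = a" "get 2 (a, b, c) = b" "get 3 (a, b, c) = c"
  by (simp_all add: get_def)

definition coord_symmetries :: "(triple \<Rightarrow> triple) set" where
  "coord_symmetries =
     {\<lambda>(a, b, c). (\<not> a, b, c), \<lambda>(a, b, c). (a, \<not> b, c), \<lambda>(a, b, c). (a, b, \<not> c),
      \<lambda>(a, b, c). (a, b, c), \<lambda>(a, b, c). (a, c, b), \<lambda>(a, b, c). (b, a, c),
      \<lambda>(a, b, c). (b, c, a), \<lambda>(a, b, c). (c, a, b), \<lambda>(a, b, c). (c, b, a)}"

lemma negate_coord_in_coord_symmetries:
  assumes "i \<in> {1, 2, 3}"
  obtains g where "g \<in> coord_symmetries" "negate_coord i T = g ` T"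
proof -
  have "\<exists>g\<in>coord_symmetries. \<forall>x. mk (\<lambda>j. if j = i then \<not> get j x else get j x) = g x"
    using assms unfolding coord_symmetries_def mk_def
    by (elim insertE emptyE) simp_all
  then obtain g where g: "g \<in> coord_symmetries"
    and eq: "\<And>x. mk (\<lambda>j. if j = i then \<not> get j x else get j x) = g x"
    by blast
  show ?thesis
    by (rule that[OF g]) (unfold negate_coord_def, rule image_cong[OF refl eq])
qed

lemma permutes_123_cases:
  assumes "\<sigma> permutes {1::nat, 2, 3}"
  shows "(\<sigma> 1, \<sigma> 2, \<sigma> 3) \<in> {(1,2,3), (1,3,2), (2,1,3), (2,3,1), (3,1,2), (3,2,1)}"
proof -
  have "\<sigma> 1 \<noteq> \<sigma> 2" "\<sigma> 1 \<noteq> \<sigma> 3" "\<sigma> 2 \<noteq> \<sigma> 3"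
    using permutes_inj[OF assms] by (simp_all add: inj_eq)
  moreover have "\<sigma> 1 \<in> {1, 2, 3}" "\<sigma> 2 \<in> {1, 2, 3}" "\<sigma> 3 \<in> {1, 2, 3}"
    using permutes_in_image[OF assms] by simp_all
  ultimately show ?thesis by (elim insertE emptyE) simp_all
qed

lemma permute_coords_in_coord_symmetries:
  assumes "\<sigma> permutes {1, 2, 3}"
  obtains g where "g \<in> coord_symmetries" "permute_coords \<sigma> T = g ` T"
proof -
  have "\<exists>g\<in>coord_symmetries. \<forall>x. mk (\<lambda>j. get (\<sigma> j) x) = g x"
    using permutes_123_cases[OF assms] unfolding coord_symmetries_def mk_def
    by (elim insertE emptyE) simp_all
  then obtain g where g: "g \<in> coord_symmetries" and eq: "\<And>x. mk (\<lambda>j. get (\<sigma> j) x) = g x"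
    by blast
  show ?thesis
    by (rule that[OF g]) (unfold permute_coords_def, rule image_cong[OF refl eq])
qed

lemma equiv_class_invariant:
  assumes "S \<in> equiv_class S0" "P S0" "\<And>T g. P T \<Longrightarrow> g \<in> coord_symmetries \<Longrightarrow> P (g ` T)"
  shows "P S"
  using assms(1)
proof induction
  case base show ?case by fact
next
  case (neg T i)
  then obtain g where "g \<in> coord_symmetries" "negate_coord i T = g ` T"
    using negate_coord_in_coord_symmetries by blast
  with neg.IH show ?case by (simp add: assms(3))
next
  case (perm T \<sigma>)
  then obtain g where "g \<in> coord_symmetries" "permute_coords \<sigma> T = g ` T"
    using permute_coords_in_coord_symmetries by blast
  with perm.IH show ?case by (simp add: assms(3))
qed

definition hamming :: "triple \<Rightarrow> triple \<Rightarrow> nat" where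
  "hamming x y = of_bool (get 1 x \<noteq> get 1 y) + of_bool (get 2 x \<noteq> get 2 y) + of_bool (get 3 x \<noteq> get 3 y)"

lemma hamming_eq_1_iff:
  "hamming x y = 1 \<longleftrightarrow>
     (get 1 x \<noteq> get 1 y \<and> get 2 x = get 2 y \<and> get 3 x = get 3 y) \<or>
     (get 1 x = get 1 y \<and> get 2 x \<noteq> get 2 y \<and> get 3 x = get 3 y) \<or>
     (get 1 x = get 1 y \<and> get 2 x = get 2 y \<and> get 3 x \<noteq> get 3 y)"
  by (cases "get 1 x = get 1 y"; cases "get 2 x = get 2 y"; cases "get 3 x = get 3 y")
    (simp_all add: hamming_def)

lemma hamming_eq_2_iff:
  "hamming x y = 2 \<longleftrightarrow>
     (get 1 x = get 1 y \<and> get 2 x \<noteq> get 2 y \<and> get 3 x \<noteq> get 3 y) \<or>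
     (get 1 x \<noteq> get 1 y \<and> get 2 x = get 2 y \<and> get 3 x \<noteq> get 3 y) \<or>
     (get 1 x \<noteq> get 1 y \<and> get 2 x \<noteq> get 2 y \<and> get 3 x = get 3 y)"
  by (cases "get 1 x = get 1 y"; cases "get 2 x = get 2 y"; cases "get 3 x = get 3 y")
    (simp_all add: hamming_def)

lemma hamming_coord_symmetry:
  assumes "g \<in> coord_symmetries" shows "hamming (g x) (g y) = hamming x y"
  using assms unfolding coord_symmetries_def
  by (cases x; cases y) (elim insertE emptyE; simp add: hamming_def ac_simps)

definition hamming_obstruction :: "triple set \<Rightarrow> bool" where
  "hamming_obstruction S \<longleftrightarrow>
     (\<exists>x\<in>S. \<exists>y\<in>S. hamming x y = 1) \<or>
     (\<exists>x\<in>S. \<exists>y\<in>S. \<exists>z\<in>S. hamming x y = 2 \<and> hamming y z = 2 \<and> hamming x z = 2)"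

lemma hamming_obstruction_image:
  assumes "g \<in> coord_symmetries" "hamming_obstruction T" shows "hamming_obstruction (g ` T)"
  using assms unfolding hamming_obstruction_def by (simp add: hamming_coord_symmetry)

definition parity_form :: "nat \<Rightarrow> triple \<Rightarrow> bool" where
  "parity_form k x = (case x of (a, b, c) \<Rightarrow>
     if k = 0 then (a \<noteq> b) \<noteq> c else if k = 1 then a \<noteq> b else if k = 2 then b \<noteq> c else c \<noteq> a)"

definition on_parity_plane :: "triple set \<Rightarrow> bool" where
  "on_parity_plane S \<longleftrightarrow> (\<exists>k\<in>{0, 1, 2, 3}. \<exists>c. S \<subseteq> {x. parity_form k x = c})"

lemma parity_form_coord_symmetry:
  assumes "g \<in> coord_symmetries" "k \<in> {0, 1, 2, 3}"
  shows "\<exists>k'\<in>{0, 1, 2, 3}. \<exists>c. \<forall>x. parity_form k' (g x) = (parity_form k x \<noteq> c)"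
  using assms unfolding coord_symmetries_def parity_form_def
  by (elim insertE emptyE) (simp_all add: all_bool_eq ex_bool_eq)

lemma on_parity_plane_image:
  assumes "g \<in> coord_symmetries" "on_parity_plane T" shows "on_parity_plane (g ` T)"
proof -
  obtain k c where k: "k \<in> {0, 1, 2, 3}" and T: "T \<subseteq> {x. parity_form k x = c}"
    using assms(2) unfolding on_parity_plane_def by blast
  obtain k' c' where "k' \<in> {0, 1, 2, 3}" "\<And>x. parity_form k' (g x) = (parity_form k x \<noteq> c')"
    using parity_form_coord_symmetry[OF assms(1) k] by blast
  with T have "g ` T \<subseteq> {x. parity_form k' x = (c \<noteq> c')}" by auto
  with \<open>k' \<in> _\<close> show ?thesis unfolding on_parity_plane_def by blast
qed

lemma view_eq_iff [simp]:
  "view 1 (a, b, c) = view 1 (a', b', c') \<longleftrightarrow> a = a' \<and> c = c'"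
  "view 2 (a, b, c) = view 2 (a', b', c') \<longleftrightarrow> b = b' \<and> a = a'"
  "view 3 (a, b, c) = view 3 (a', b', c') \<longleftrightarrow> c = c' \<and> b = b'"
  by (auto simp: view_def)

definition deterministic_3SS :: "triple set \<Rightarrow> (triple \<Rightarrow> nat \<times> nat \<times> nat) \<Rightarrow> bool" where
  "deterministic_3SS S f \<longleftrightarrow>
     (\<forall>i\<in>{1, 2, 3}. \<forall>x\<in>S. \<forall>y\<in>S. view i (f x) = view i (f y) \<longleftrightarrow> get i x = get i y)"

lemma is_3SS_singleton_deterministic:
  assumes scheme: "is_3SS S {r} P \<psi>" shows "deterministic_3SS S (\<lambda>x. \<psi> x r)"
  unfolding deterministic_3SS_def
proof (intro ballI)
  fix i :: nat and x y assume i: "i \<in> {1, 2, 3}" and xy: "x \<in> S" "y \<in> S"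
  have mass: "sum P {r' \<in> {r}. Q r'} = of_bool (Q r)" for Q
  proof -
    have "{r' \<in> {r}. Q r'} = (if Q r then {r} else {})" by auto
    then show ?thesis using scheme by (simp add: is_3SS_def)
  qed
  obtain \<phi> where "\<forall>x\<in>S. sum P {r' \<in> {r}. \<phi> (view i (\<psi> x r')) = get i x} = 1"
    using scheme i unfolding is_3SS_def by blast
  then have decode: "\<phi> (view i (\<psi> u r)) = get i u" if "u \<in> S" for u
    using that unfolding mass by simp
  have "sum P {r' \<in> {r}. view i (\<psi> x r') = view i (\<psi> x r)} =
        sum P {r' \<in> {r}. view i (\<psi> y r') = view i (\<psi> x r)}" if "get i x = get i y"
    using scheme i xy that unfolding is_3SS_def by blast
  then have "get i x = get i y \<Longrightarrow> view i (\<psi> x r) = view i (\<psi> y r)"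
    unfolding mass by simp
  with decode xy show "view i (\<psi> x r) = view i (\<psi> y r) \<longleftrightarrow> get i x = get i y"
    by metis
qed

lemma deterministic_3SS_share_eqs:
  assumes "deterministic_3SS S f" "x \<in> S" "y \<in> S" "f x = (p1, p2, p3)" "f y = (q1, q2, q3)"
  shows "(p1 = q1 \<and> p3 = q3) \<longleftrightarrow> get 1 x = get 1 y"
    and "(p2 = q2 \<and> p1 = q1) \<longleftrightarrow> get 2 x = get 2 y"
    and "(p3 = q3 \<and> p2 = q2) \<longleftrightarrow> get 3 x = get 3 y"
  using assms unfolding deterministic_3SS_def by (metis insertCI view_eq_iff)+

text \<open>The two parties whose coordinates agree jointly see all three shares.\<close>
lemma deterministic_3SS_hamming_ne_1:
  assumes "deterministic_3SS S f" "x \<in> S" "y \<in> S" shows "hamming x y \<noteq> 1"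
proof -
  obtain p1 p2 p3 q1 q2 q3 where "f x = (p1, p2, p3)" "f y = (q1, q2, q3)"
    using prod_cases3 by meson
  from deterministic_3SS_share_eqs[OF assms this] show ?thesis
    unfolding hamming_eq_1_iff by blast
qed

text \<open>A pair agreeing only in coordinate \<open>i\<close> differs in exactly the share party \<open>i\<close> does not
  see. The three pairs agree in three distinct coordinates, so each share differs across exactly
  one pair, contradicting transitivity of equality along the other two.\<close>
lemma deterministic_3SS_no_hamming_triangle:
  assumes det: "deterministic_3SS S f" and S: "x \<in> S" "y \<in> S" "z \<in> S"
    and "hamming x y = 2" "hamming y z = 2" "hamming x z = 2"
  shows False
proof -
  obtain p1 p2 p3 q1 q2 q3 r1 r2 r3 where f: "f x = (p1, p2, p3)" "f y = (q1, q2, q3)" "f z = (r1, r2, r3)"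
    using prod_cases3 by meson
  obtain a1 a2 a3 b1 b2 b3 c1 c2 c3 where xyz: "x = (a1, a2, a3)" "y = (b1, b2, b3)" "z = (c1, c2, c3)"
    using prod_cases3 by meson
  show False
    using deterministic_3SS_share_eqs[OF det S(1,2) f(1,2)]
      deterministic_3SS_share_eqs[OF det S(2,3) f(2,3)]
      deterministic_3SS_share_eqs[OF det S(1,3) f(1,3)] assms(5-7)
    unfolding hamming_eq_2_iff xyz get_simps by smt
qed

lemma is_3SS_card_ge_2:
  assumes scheme: "is_3SS S R P \<psi>" and "hamming_obstruction S" shows "2 \<le> card R"
proof (rule ccontr)
  assume "\<not> 2 \<le> card R"
  moreover have "finite R" "R \<noteq> {}"
    using scheme unfolding is_3SS_def by auto
  ultimately have "card R = 1"
    using card_0_eq[of R] by linarith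
  then obtain r where "R = {r}"
    by (rule card_1_singletonE)
  with scheme have "deterministic_3SS S (\<lambda>x. \<psi> x r)"
    using is_3SS_singleton_deterministic by blast
  then have "\<not> hamming_obstruction S"
    unfolding hamming_obstruction_def
    using deterministic_3SS_hamming_ne_1 deterministic_3SS_no_hamming_triangle by metis
  with \<open>hamming_obstruction S\<close> show False by contradiction
qed

lemma is_3SS_subset: "is_3SS T R P \<psi> \<Longrightarrow> S \<subseteq> T \<Longrightarrow> is_3SS S R P \<psi>"
  unfolding is_3SS_def by (meson subsetD)

lemma is_3SS_uniform_bit:
  assumes decodes: "\<And>i x r. i \<in> {1, 2, 3} \<Longrightarrow> x \<in> S \<Longrightarrow> r \<in> {0, 1} \<Longrightarrow> \<phi> i (view i (\<psi> x r)) = get i x"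
    and hides: "\<And>i x y. i \<in> {1, 2, 3} \<Longrightarrow> x \<in> S \<Longrightarrow> y \<in> S \<Longrightarrow> get i x = get i y \<Longrightarrow>
      (view i (\<psi> x 0) = view i (\<psi> y 0) \<and> view i (\<psi> x 1) = view i (\<psi> y 1)) \<or>
      (view i (\<psi> x 0) = view i (\<psi> y 1) \<and> view i (\<psi> x 1) = view i (\<psi> y 0))"
  shows "is_3SS S {0, 1} (\<lambda>_. 1 / 2) \<psi>"
proof -
  have half_sum: "sum (\<lambda>_. 1 / 2 :: real) {r \<in> {0 :: nat, 1}. Q r} = of_bool (Q 0) / 2 + of_bool (Q 1) / 2"
    for Q by (subst sum.inter_filter) simp_all
  have correct: "sum (\<lambda>_. 1 / 2 :: real) {r \<in> {0, 1}. \<phi> i (view i (\<psi> x r)) = get i x} = 1"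
    if "i \<in> {1, 2, 3}" "x \<in> S" for i x
    unfolding half_sum using decodes[OF that] by simp
  have private_views: "sum (\<lambda>_. 1 / 2 :: real) {r \<in> {0, 1}. view i (\<psi> x r) = v} =
      sum (\<lambda>_. 1 / 2) {r \<in> {0, 1}. view i (\<psi> y r) = v}"
    if "i \<in> {1, 2, 3}" "x \<in> S" "y \<in> S" "get i x = get i y" for i x y v
    using hides[OF that] unfolding half_sum by (elim disjE) (simp_all add: add.commute)
  show ?thesis
    unfolding is_3SS_def
  proof (intro conjI ballI allI impI)
    fix i :: nat assume "i \<in> {1, 2, 3}"
    with correct show "\<exists>\<phi>. \<forall>x\<in>S. sum (\<lambda>_. 1 / 2 :: real) {r \<in> {0, 1}. \<phi> (view i (\<psi> x r)) = get i x} = 1"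
      by blast
  next
    fix i x y v assume "i \<in> {1, 2, 3}" "x \<in> S" "y \<in> S" "get i x = get i y"
    then show "sum (\<lambda>_. 1 / 2 :: real) {r \<in> {0, 1}. view i (\<psi> x r) = v} =
        sum (\<lambda>_. 1 / 2) {r \<in> {0, 1}. view i (\<psi> y r) = v}"
      by (rule private_views)
  qed simp_all
qed

text \<open>For the plane \<open>x\<^sub>k \<oplus> x\<^sub>k\<^sub>+\<^sub>1 = c\<close> the share seen by
  parties \<open>k\<close> and \<open>k + 1\<close> is \<open>x\<^sub>k\<close> in the clear and the third coordinate is padded by \<open>t\<close>;
  for \<open>x\<^sub>1 \<oplus> x\<^sub>2 \<oplus> x\<^sub>3 = c\<close> the shares are \<open>(t, t \<oplus> x\<^sub>2, t \<oplus> x\<^sub>1)\<close>.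
  Indices are cyclic, \<open>k mod 3 + 1\<close> being the successor of \<open>k\<close>.\<close>
definition parity_scheme :: "nat \<Rightarrow> triple \<Rightarrow> nat \<Rightarrow> nat \<times> nat \<times> nat" where
  "parity_scheme k x r = (case x of (a, b, c) \<Rightarrow> let t = (r = 1) in
     if k = 0 then (of_bool t, of_bool (t \<noteq> b), of_bool (t \<noteq> a))
     else if k = 1 then (of_bool a, of_bool t, of_bool (t \<noteq> c))
     else if k = 2 then (of_bool (t \<noteq> a), of_bool b, of_bool t)
     else (of_bool t, of_bool (t \<noteq> b), of_bool c))"

definition parity_decoder :: "nat \<Rightarrow> bool \<Rightarrow> nat \<Rightarrow> nat \<times> nat \<Rightarrow> bool" where
  "parity_decoder k c i v = (case v of (u, w) \<Rightarrow>
     if k = 0 then (u \<noteq> w) \<noteq> (i = 3 \<and> c)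
     else if i = k then u = 1
     else if i = k mod 3 + 1 then (w = 1) \<noteq> c
     else u \<noteq> w)"

lemma parity_decoder_correct:
  assumes "k \<in> {0, 1, 2, 3}" "i \<in> {1, 2, 3}"
  shows "\<forall>x. \<forall>r\<in>{0, 1}. parity_form k x = c \<longrightarrow>
    parity_decoder k c i (view i (parity_scheme k x r)) = get i x"
  using assms
  by (cases c; elim insertE emptyE; simp add: all_bool_eq parity_decoder_def parity_scheme_def parity_form_def view_def)

lemma parity_scheme_hides:
  assumes "k \<in> {0, 1, 2, 3}" "i \<in> {1, 2, 3}"
  shows "\<forall>x y. parity_form k x = c \<longrightarrow> parity_form k y = c \<longrightarrow> get i x = get i y \<longrightarrow>
    (view i (parity_scheme k x 0) = view i (parity_scheme k y 0) \<and>
     view i (parity_scheme k x 1) = view i (parity_scheme k y 1)) \<or>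
    (view i (parity_scheme k x 0) = view i (parity_scheme k y 1) \<and>
     view i (parity_scheme k x 1) = view i (parity_scheme k y 0))"
  using assms
  by (cases c; elim insertE emptyE; simp add: all_bool_eq parity_scheme_def parity_form_def view_def)

lemma parity_scheme_is_3SS:
  assumes k: "k \<in> {0, 1, 2, 3}"
  shows "is_3SS {x. parity_form k x = c} {0, 1} (\<lambda>_. 1 / 2) (parity_scheme k)"
proof (rule is_3SS_uniform_bit)
  fix i r :: nat and x assume "i \<in> {1, 2, 3}" "x \<in> {x. parity_form k x = c}" "r \<in> {0, 1}"
  then show "parity_decoder k c i (view i (parity_scheme k x r)) = get i x"
    using parity_decoder_correct[OF k \<open>i \<in> _\<close>, of c] by blast
next
  fix i x y assume "i \<in> {1, 2, 3}" "x \<in> {x. parity_form k x = c}" "y \<in> {x. parity_form k x = c}"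
    "get i x = get i y"
  then show "(view i (parity_scheme k x 0) = view i (parity_scheme k y 0) \<and>
      view i (parity_scheme k x 1) = view i (parity_scheme k y 1)) \<or>
      (view i (parity_scheme k x 0) = view i (parity_scheme k y 1) \<and>
      view i (parity_scheme k x 1) = view i (parity_scheme k y 0))"
    using parity_scheme_hides[OF k \<open>i \<in> _\<close>, of c] by blast
qed

lemma on_parity_plane_is_3SS:
  assumes "on_parity_plane S" shows "\<exists>\<psi>. is_3SS S {0, 1} (\<lambda>_. 1 / 2) \<psi>"
  using assms parity_scheme_is_3SS is_3SS_subset unfolding on_parity_plane_def by blast

lemma rho_eq_1I:
  assumes "is_3SS S {0, 1} P \<psi>" and "\<And>R P \<psi>. is_3SS S R P \<psi> \<Longrightarrow> 2 \<le> card R"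
  shows "rho S = 1"
  unfolding rho_def
proof (rule cInf_eq_minimum)
  show "1 \<in> {log 2 (real (card R)) | R P \<psi>. is_3SS S R P \<psi>}"
    using assms(1) by force
next
  fix y assume "y \<in> {log 2 (real (card R)) | R P \<psi>. is_3SS S R P \<psi>}"
  then obtain R P \<psi> where y: "y = log 2 (real (card R))" and "is_3SS S R P \<psi>" by blast
  from \<open>is_3SS S R P \<psi>\<close> have "2 \<le> card R" by (rule assms(2))
  then show "1 \<le> y" unfolding y by simp
qed

theorem mainTheorem7:
  assumes "S0 \<in> {{(False,False,False),(False,False,True)},
                 {(False,False,False),(False,False,True),(True,True,False)},
                 {(False,False,False),(False,False,True),(True,True,False),(True,True,True)},
                 {(False,False,False),(False,True,True),(True,False,True)},
                 {(False,False,False),(False,True,True),(True,False,True),(True,True,False)}}"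
    and "S \<in> equiv_class S0"
  shows "rho S = 1"
proof -
  have "on_parity_plane S0 \<and> hamming_obstruction S0"
    using assms(1) unfolding on_parity_plane_def hamming_obstruction_def
    by (elim insertE emptyE) (simp_all add: parity_form_def hamming_def)
  then have "on_parity_plane S \<and> hamming_obstruction S"
    using assms(2) equiv_class_invariant on_parity_plane_image hamming_obstruction_image by blast
  then show ?thesis
    using on_parity_plane_is_3SS is_3SS_card_ge_2 rho_eq_1I by metis
qed

end
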